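(* Let $p$ be an even positive integer and $\mathbb{H}$ any real Hilbert space (of dimension at least $2$). Let $T\in\mathbb{L}(\mathbb{H},\ell_p^2)$ be of rank one with $\|T\|=1$. Then $T$ is not an extreme contraction.
   Context: $\ell_p^2$ is $\mathbb{R}^2$ with norm $\|(a,b)\|=(|a|^p+|b|^p)^{1/p}$. An extreme contraction is a norm one operator that is an extreme point of the closed unit ball of $\mathbb{L}(\mathbb{H},\ell_p^2)$ (bounded linear operators, operator norm). *)

theory Defs
  imports "HOL-Analysis.Analysis"
begin

text \<open>The p-norm on the real plane: ell_p^2 is real x real with this norm.\<close>
definition lp2_norm :: "nat \<Rightarrow> real \<times> real \<Rightarrow> real" where
  "lp2_norm p v = (\<bar>fst v\<bar> powr real p + \<bar>snd v\<bar> powr real p) powr (1 / real p)"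

definition op_norm_lp :: "nat \<Rightarrow> ('a::real_normed_vector \<Rightarrow> real \<times> real) \<Rightarrow> real" where
  "op_norm_lp p T = (SUP x\<in>{x. norm x \<le> 1}. lp2_norm p (T x))"

text \<open>Closed unit ball of the space of bounded linear operators L(H, ell_p^2).
  (Boundedness does not depend on which norm is put on the 2-dimensional codomain.)\<close>
definition op_unit_ball :: "nat \<Rightarrow> ('a::real_normed_vector \<Rightarrow> real \<times> real) set" where
  "op_unit_ball p = {S. bounded_linear S \<and> op_norm_lp p S \<le> 1}"

definition extreme_contraction :: "nat \<Rightarrow> ('a::real_normed_vector \<Rightarrow> real \<times> real) \<Rightarrow> bool" where
  "extreme_contraction p T \<longleftrightarrow>
     bounded_linear T \<and> op_norm_lp p T = 1 \<and>
     \<not> (\<exists>S1\<in>op_unit_ball p. \<exists>S2\<in>op_unit_ball p. \<exists>t::real. 0 < t \<and> t < 1 \<and> S1 \<noteq> S2 \<and>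
           T = (\<lambda>x. t *\<^sub>R S1 x + (1 - t) *\<^sub>R S2 x))"

end

theory Submission
  imports Defs
begin

text \<open>Write \<open>T x = \<psi> x \<cdot> w\<close> with \<open>\<psi>\<close> a functional of norm one and \<open>w\<close> a unit vector of
  \<open>\<ell>\<^sub>p\<^sup>2\<close>. Since \<open>dim H \<ge> 2\<close> there is a unit vector \<open>f\<close> in the kernel of \<open>\<psi>\<close>, and then
  \<open>\<psi> x\<^sup>2 + \<langle>x, f\<rangle>\<^sup>2 \<le> 1\<close> on the unit ball. For even \<open>p\<close> the unit sphere of \<open>\<ell>\<^sub>p\<^sup>2\<close> is the zero set
  of the polynomial \<open>a\<^sup>p + b\<^sup>p - 1\<close>, whose gradient at \<open>w\<close> is orthogonal to
  \<open>z = (-w\<^sub>2\<^bsup>p-1\<^esup>, w\<^sub>1\<^bsup>p-1\<^esup>)\<close>. A second order Taylor estimate then shows that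
  \<open>a w + \<epsilon> b z\<close> stays in the unit ball whenever \<open>a\<^sup>2 + b\<^sup>2 \<le> 1\<close> and \<open>\<epsilon>\<close> is small, the
  quadratic loss \<open>b\<^sup>2\<close> being paid by the gain \<open>a\<^sup>2 - a\<^sup>p\<close>. Hence both
  \<open>T \<plusminus> \<epsilon> \<langle>\<cdot>, f\<rangle> z\<close> are contractions, and \<open>T\<close> is their midpoint.\<close>

lemma abs_power_add_minus_linear_le:
  fixes x y :: real
  assumes "\<bar>x\<bar> \<le> 1" "\<bar>y\<bar> \<le> 1"
  shows "\<bar>(x + y)^n - x^n - real n * x^(n - 1) * y\<bar> \<le> real n * 2^n * y^2"
proof (induction n)
  case 0
  then show ?case by simp
next
  case (Suc n)
  define r where "r = (x + y)^n - x^n - real n * x^(n - 1) * y"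
  have rec: "(x + y)^Suc n - x^Suc n - real (Suc n) * x^(Suc n - 1) * y
      = (x + y) * r + real n * x^(n - 1) * y^2"
    unfolding r_def by (cases n) (simp_all add: algebra_simps power2_eq_square)
  have "\<bar>(x + y) * r\<bar> \<le> 2 * (real n * 2^n * y^2)"
    unfolding abs_mult r_def using assms Suc.IH by (intro mult_mono) auto
  moreover have "\<bar>real n * x^(n - 1) * y^2\<bar> \<le> real n * y^2"
  proof -
    have "\<bar>x\<bar>^(n - 1) * y^2 \<le> y^2"
      using assms by (simp add: power_le_one mult_left_le_one_le)
    then show ?thesis by (simp add: abs_mult power_abs mult_left_mono mult.assoc)
  qed
  moreover have "real n * y^2 \<le> 2^n * y^2"
    by (intro mult_right_mono) (auto simp: of_nat_less_two_power less_imp_le)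
  moreover have "2 * (real n * 2^n * y^2) + 2^n * y^2 \<le> real (Suc n) * 2^Suc n * y^2"
    by (simp add: algebra_simps)
  ultimately show ?case
    unfolding rec using abs_triangle_ineq[of "(x + y) * r" "real n * x^(n - 1) * y^2"]
    by linarith
qed

lemma lp2_norm_nonneg: "lp2_norm p v \<ge> 0"
  unfolding lp2_norm_def by simp

lemma lp2_norm_power:
  assumes "even p" "p > 0"
  shows "lp2_norm p v ^ p = fst v ^ p + snd v ^ p"
proof -
  define S where "S = fst v ^ p + snd v ^ p"
  have "S \<ge> 0" unfolding S_def using assms(1) by (simp add: zero_le_even_power)
  have "\<bar>c\<bar> powr real p = c ^ p" for c :: real
    using assms powr_realpow'[of "\<bar>c\<bar>" p] by (simp add: power_even_abs)
  then have "lp2_norm p v = S powr (1 / real p)" unfolding lp2_norm_def S_def by simp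
  also have "(S powr (1 / real p)) ^ p = S"
    using \<open>S \<ge> 0\<close> assms(2) by (simp add: powr_realpow' [symmetric] powr_powr)
  finally show ?thesis unfolding S_def .
qed

lemma lp2_norm_le_1_iff:
  assumes "even p" "p > 0"
  shows "lp2_norm p v \<le> 1 \<longleftrightarrow> fst v ^ p + snd v ^ p \<le> 1"
  using power_le_one_iff[OF lp2_norm_nonneg, of p v p] assms
  by (simp add: lp2_norm_power)

lemma lp2_norm_pos:
  assumes "even p" "p > 0" "v \<noteq> 0"
  shows "lp2_norm p v > 0"
proof -
  have "fst v ^ p \<ge> 0" "snd v ^ p \<ge> 0" using assms(1) by (simp_all add: zero_le_even_power)
  moreover have "fst v ^ p + snd v ^ p \<noteq> 0"
    using assms calculation by (auto simp: prod_eq_iff add_nonneg_eq_0_iff)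
  ultimately have "lp2_norm p v ^ p \<noteq> 0" using assms by (simp add: lp2_norm_power)
  then show ?thesis using lp2_norm_nonneg[of p v] assms(2) by (cases "lp2_norm p v = 0") auto
qed

lemma lp2_norm_scaleR:
  assumes "p > 0"
  shows "lp2_norm p (c *\<^sub>R v) = \<bar>c\<bar> * lp2_norm p v"
proof -
  have "lp2_norm p (c *\<^sub>R v)
      = (\<bar>c\<bar> powr real p) powr (1 / real p)
          * (\<bar>fst v\<bar> powr real p + \<bar>snd v\<bar> powr real p) powr (1 / real p)"
    unfolding lp2_norm_def by (simp add: abs_mult powr_mult algebra_simps flip: powr_mult)
  then show ?thesis using assms by (simp add: powr_powr lp2_norm_def)
qed

lemma lp2_norm_le_1_imp_abs_le_1:
  assumes "even p" "p > 0" "lp2_norm p w \<le> 1"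
  shows "\<bar>fst w\<bar> \<le> 1" "\<bar>snd w\<bar> \<le> 1"
proof -
  have "\<bar>c\<bar> \<le> 1" if "c ^ p \<le> 1" for c :: real
    using that assms(1,2) power_le_one_iff[of "\<bar>c\<bar>" p] by (simp add: power_even_abs)
  moreover have "fst w ^ p \<le> 1" "snd w ^ p \<le> 1"
    using assms lp2_norm_le_1_iff[OF assms(1,2)]
      zero_le_even_power[OF assms(1), of "fst w"] zero_le_even_power[OF assms(1), of "snd w"]
    by simp_all
  ultimately show "\<bar>fst w\<bar> \<le> 1" "\<bar>snd w\<bar> \<le> 1" by blast+
qed

lemma even_power_le_power2:
  fixes a :: real
  assumes "even p" "p > 0" "\<bar>a\<bar> \<le> 1"
  shows "a ^ p \<le> a^2"
proof -
  obtain k where "p = 2 * k" "k \<ge> 1" using assms(1,2) by (auto elim: evenE)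
  then have "a ^ p = (a^2) ^ k" by (simp add: power_mult)
  also have "\<dots> \<le> (a^2) ^ 1"
    using \<open>k \<ge> 1\<close> assms(3) by (intro power_decreasing) (auto simp: abs_square_le_1)
  finally show ?thesis by simp
qed

definition lp2_tangent :: "nat \<Rightarrow> real \<times> real \<Rightarrow> real \<times> real" where
  "lp2_tangent p w = (- (snd w ^ (p - 1)), fst w ^ (p - 1))"

lemma lp2_tangent_nonzero:
  assumes "p > 0" "w \<noteq> 0"
  shows "lp2_tangent p w \<noteq> 0"
  using assms by (auto simp: lp2_tangent_def prod_eq_iff)

lemma lp2_norm_tangent_perturbation_le_1:
  assumes ev: "even p" and p: "p > 0" and w: "lp2_norm p w = 1"
    and e: "2 * real p * 2^p * e^2 \<le> 1" and ab: "a^2 + b^2 \<le> 1"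
  shows "lp2_norm p (a *\<^sub>R w + (e * b) *\<^sub>R lp2_tangent p w) \<le> 1"
proof -
  define x1 y1 x2 y2
    where "x1 = a * fst w" and "y1 = - e * b * snd w ^ (p - 1)"
      and "x2 = a * snd w" and "y2 = e * b * fst w ^ (p - 1)"
  have unit: "fst w ^ p + snd w ^ p = 1" using lp2_norm_power[OF ev p, of w] w by simp
  have w1: "\<bar>fst w\<bar> \<le> 1" and w2: "\<bar>snd w\<bar> \<le> 1"
    using lp2_norm_le_1_imp_abs_le_1[OF ev p] w by simp_all
  have "1 \<le> 2 * real p * 2^p" using p by (simp add: mult_ge1_I)
  then have "e^2 \<le> 1" using e mult_right_mono[of 1 "2 * real p * 2^p" "e^2"] by simp
  then have e1: "\<bar>e\<bar> \<le> 1" by (simp add: abs_square_le_1)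
  have "a^2 \<le> 1" "b^2 \<le> 1" using ab zero_le_power2[of a] zero_le_power2[of b] by linarith+
  then have a1: "\<bar>a\<bar> \<le> 1" and b1: "\<bar>b\<bar> \<le> 1" by (simp_all add: abs_square_le_1)
  have x: "\<bar>x1\<bar> \<le> 1" "\<bar>x2\<bar> \<le> 1"
    unfolding x1_def x2_def abs_mult using a1 w1 w2 by (simp_all add: mult_le_one)
  have y: "\<bar>y1\<bar> \<le> 1" "\<bar>y2\<bar> \<le> 1"
    unfolding y1_def y2_def abs_mult using e1 b1 w1 w2
    by (simp_all add: mult_le_one power_abs power_le_one)
  have "(c ^ (p - 1))^2 \<le> 1" if "\<bar>c\<bar> \<le> 1" for c :: real
    using that by (simp add: abs_square_le_1 power_abs power_le_one)
  then have y_sq: "y1^2 \<le> e^2 * b^2" "y2^2 \<le> e^2 * b^2"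
    unfolding y1_def y2_def power_mult_distrib using w1 w2
    by (simp_all add: mult_left_le)
  have "(x1 + y1) ^ p + (x2 + y2) ^ p
      \<le> x1 ^ p + x2 ^ p + real p * (x1 ^ (p - 1) * y1 + x2 ^ (p - 1) * y2)
         + real p * 2^p * (y1^2 + y2^2)"
    using abs_power_add_minus_linear_le[OF x(1) y(1), of p]
      abs_power_add_minus_linear_le[OF x(2) y(2), of p]
    by (simp add: algebra_simps abs_le_iff)
  also have "x1 ^ p + x2 ^ p = a ^ p"
    unfolding x1_def x2_def by (simp add: power_mult_distrib flip: distrib_left unit)
  also have "x1 ^ (p - 1) * y1 + x2 ^ (p - 1) * y2 = 0"
    unfolding x1_def x2_def y1_def y2_def by (simp add: power_mult_distrib algebra_simps)
  also have "real p * 2^p * (y1^2 + y2^2) \<le> b^2"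
  proof -
    have "real p * 2^p * (y1^2 + y2^2) \<le> real p * 2^p * (2 * e^2 * b^2)"
      using y_sq by (intro mult_left_mono) auto
    also have "\<dots> = (2 * real p * 2^p * e^2) * b^2" by simp
    also have "\<dots> \<le> b^2" using e by (simp add: mult_left_le_one_le)
    finally show ?thesis .
  qed
  finally have "(x1 + y1) ^ p + (x2 + y2) ^ p \<le> 1"
    using even_power_le_power2[OF ev p a1] ab by simp
  then show ?thesis
    unfolding lp2_norm_le_1_iff[OF ev p]
    by (simp add: x1_def x2_def y1_def y2_def lp2_tangent_def algebra_simps)
qed

lemma rank_one_factorization:
  fixes T :: "'a::real_normed_vector \<Rightarrow> 'b::real_inner"
  assumes "bounded_linear T" "dim (range T) = 1"
  obtains \<psi> w where "bounded_linear \<psi>" "w \<noteq> 0" "\<And>x. T x = \<psi> x *\<^sub>R w"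
proof -
  obtain B where "independent B" "range T \<subseteq> span B" "card B = 1"
    using basis_exists[of "range T"] assms(2) by metis
  then obtain w where w: "w \<noteq> 0" "range T \<subseteq> span {w}"
    by (auto simp: card_1_singleton_iff)
  define \<psi> where "\<psi> x = (T x \<bullet> w) / (w \<bullet> w)" for x
  have "bounded_linear \<psi>"
    unfolding \<psi>_def
    by (rule bounded_linear_compose[OF bounded_linear_divide
          bounded_linear_inner_left_comp[OF assms(1)]])
  moreover have "T x = \<psi> x *\<^sub>R w" for x
  proof -
    obtain c where "T x = c *\<^sub>R w" using w(2) by (auto simp: span_singleton)
    then show ?thesis using w(1) by (simp add: \<psi>_def)
  qed
  ultimately show thesis using that w(1) by blast
qed

lemma rank_one_lp2_factorization:
  fixes T :: "'a::real_normed_vector \<Rightarrow> real \<times> real"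
  assumes "even p" "p > 0" "bounded_linear T" "dim (range T) = 1"
  obtains \<psi> w where "bounded_linear \<psi>" "lp2_norm p w = 1" "T = (\<lambda>x. \<psi> x *\<^sub>R w)"
proof -
  obtain \<psi> w where \<psi>: "bounded_linear \<psi>" and "w \<noteq> 0" and T: "\<And>x. T x = \<psi> x *\<^sub>R w"
    using rank_one_factorization[OF assms(3,4)] by blast
  define L where "L = lp2_norm p w"
  have "L > 0" unfolding L_def using lp2_norm_pos[OF assms(1,2) \<open>w \<noteq> 0\<close>] .
  have "bounded_linear (\<lambda>x. L * \<psi> x)" using \<psi> by (rule bounded_linear_const_mult)
  moreover have "lp2_norm p ((1 / L) *\<^sub>R w) = 1"
    using \<open>L > 0\<close> by (simp add: lp2_norm_scaleR[OF assms(2)] L_def)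
  moreover have "T = (\<lambda>x. (L * \<psi> x) *\<^sub>R ((1 / L) *\<^sub>R w))"
    using \<open>L > 0\<close> by (simp add: T fun_eq_iff)
  ultimately show thesis by (rule that)
qed

lemma op_unit_ballI:
  assumes "bounded_linear S" "\<And>x. norm x \<le> 1 \<Longrightarrow> lp2_norm p (S x) \<le> 1"
  shows "S \<in> op_unit_ball p"
proof -
  have "op_norm_lp p S \<le> 1"
    unfolding op_norm_lp_def by (rule cSUP_least) (use assms(2) in \<open>auto intro: exI[of _ 0]\<close>)
  then show ?thesis using assms(1) by (simp add: op_unit_ball_def)
qed

lemma abs_le_norm_if_op_norm_lp_rank_one_le_1:
  assumes "p > 0" "bounded_linear \<psi>" "lp2_norm p w = 1"
    and "op_norm_lp p (\<lambda>x. \<psi> x *\<^sub>R w) \<le> 1"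
  shows "\<bar>\<psi> x\<bar> \<le> norm x"
proof -
  have lp2: "lp2_norm p (\<psi> x *\<^sub>R w) = \<bar>\<psi> x\<bar>" for x
    by (simp add: lp2_norm_scaleR[OF assms(1)] assms(3))
  obtain K where K: "\<And>x. norm (\<psi> x) \<le> norm x * K" "K > 0"
    using bounded_linear.pos_bounded[OF assms(2)] by blast
  have "bdd_above ((\<lambda>x. lp2_norm p (\<psi> x *\<^sub>R w)) ` {x. norm x \<le> 1})"
  proof (rule bdd_aboveI2)
    fix x :: 'a assume "x \<in> {x. norm x \<le> 1}"
    then have "norm x * K \<le> K" using K(2) by (simp add: mult_left_le_one_le)
    then show "lp2_norm p (\<psi> x *\<^sub>R w) \<le> K" using K(1)[of x] by (simp add: lp2)
  qed
  then have unit_ball: "\<bar>\<psi> y\<bar> \<le> 1" if "norm y \<le> 1" for y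
    using cSUP_upper[of y "{x. norm x \<le> 1}"] that assms(4)
    unfolding op_norm_lp_def lp2 by fastforce
  have lin: "linear \<psi>" using assms(2) by (rule bounded_linear.linear)
  show ?thesis
  proof (cases "x = 0")
    case True
    then show ?thesis using linear_0[OF lin] by simp
  next
    case False
    have "\<psi> x = norm x * \<psi> (x /\<^sub>R norm x)"
      using False linear_scale[OF lin] by simp
    also have "\<bar>\<dots>\<bar> \<le> norm x" using unit_ball[of "x /\<^sub>R norm x"] False
      by (simp add: abs_mult mult_left_le)
    finally show ?thesis .
  qed
qed

lemma linear_functional_kernel_unit:
  fixes \<psi> :: "'a::real_normed_vector \<Rightarrow> real" and u v :: 'a
  assumes "linear \<psi>" "u \<noteq> v" "independent {u, v}"
  obtains f where "norm f = 1" "\<psi> f = 0"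
proof -
  have "independent {v, u}" using assms(3) by (simp add: insert_commute)
  then have "v \<notin> span {u}" using assms(2) by (simp add: independent_insert)
  have "u \<noteq> 0" using assms(3) dependent_zero[of "{u, v}"] by blast
  obtain k where "k \<noteq> 0" "\<psi> k = 0"
  proof (cases "\<psi> u = 0")
    case True
    then show thesis using that \<open>u \<noteq> 0\<close> by blast
  next
    case False
    define k where "k = \<psi> v *\<^sub>R u - \<psi> u *\<^sub>R v"
    have "\<psi> k = 0" unfolding k_def using linear_diff[OF assms(1)] linear_scale[OF assms(1)] by simp
    moreover have "k \<noteq> 0"
    proof
      assume "k = 0"
      then have "\<psi> u *\<^sub>R v = \<psi> v *\<^sub>R u" by (simp add: k_def)
      have "v = (1 / \<psi> u) *\<^sub>R (\<psi> u *\<^sub>R v)" using False by simp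
      also have "\<dots> = (\<psi> v / \<psi> u) *\<^sub>R u" unfolding \<open>\<psi> u *\<^sub>R v = \<psi> v *\<^sub>R u\<close> by simp
      finally have "v = (\<psi> v / \<psi> u) *\<^sub>R u" .
      moreover have "(\<psi> v / \<psi> u) *\<^sub>R u \<in> span {u}" by (simp add: span_base span_scale)
      ultimately show False using \<open>v \<notin> span {u}\<close> by simp
    qed
    ultimately show thesis by (rule that[rotated])
  qed
  then show thesis
    using that[of "k /\<^sub>R norm k"] linear_scale[OF assms(1)] by simp
qed

lemma power2_functional_add_power2_inner_le:
  fixes \<psi> :: "'a::real_inner \<Rightarrow> real"
  assumes "linear \<psi>" "\<And>x. \<bar>\<psi> x\<bar> \<le> norm x" "norm f = 1" "\<psi> f = 0"
  shows "(\<psi> x)^2 + (x \<bullet> f)^2 \<le> (norm x)^2"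
proof -
  define y where "y = x - (x \<bullet> f) *\<^sub>R f"
  have "\<psi> y = \<psi> x" unfolding y_def
    using linear_diff[OF assms(1)] linear_scale[OF assms(1)] assms(4) by simp
  moreover have "(norm y)^2 = (norm x)^2 - (x \<bullet> f)^2"
  proof -
    have "f \<bullet> f = 1" using assms(3) by (simp add: norm_eq_1)
    then show ?thesis unfolding y_def power2_norm_eq_inner
      by (simp add: inner_diff_left inner_diff_right inner_commute power2_eq_square)
  qed
  moreover have "(\<psi> y)^2 \<le> (norm y)^2" using power_mono[OF assms(2)[of y] abs_ge_zero, of 2] by simp
  ultimately show ?thesis by simp
qed

lemma rank_one_tangent_perturbation_in_op_unit_ball:
  fixes \<psi> :: "'a::real_inner \<Rightarrow> real"
  assumes "even p" "p > 0" "bounded_linear \<psi>" "\<And>x. \<bar>\<psi> x\<bar> \<le> norm x"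
    and "lp2_norm p w = 1" "norm f = 1" "\<psi> f = 0"
    and "2 * real p * 2^p * e^2 \<le> 1"
  shows "(\<lambda>x. \<psi> x *\<^sub>R w + (e * (x \<bullet> f)) *\<^sub>R lp2_tangent p w) \<in> op_unit_ball p"
proof (rule op_unit_ballI)
  show "bounded_linear (\<lambda>x. \<psi> x *\<^sub>R w + (e * (x \<bullet> f)) *\<^sub>R lp2_tangent p w)"
    by (intro bounded_linear_add
          bounded_linear_compose[OF bounded_linear_scaleR_left assms(3)]
          bounded_linear_compose[OF bounded_linear_scaleR_left
            bounded_linear_const_mult[OF bounded_linear_inner_left]])
next
  fix x :: 'a
  assume "norm x \<le> 1"
  then have "(\<psi> x)^2 + (x \<bullet> f)^2 \<le> 1"
    using power2_functional_add_power2_inner_le[OF bounded_linear.linear[OF assms(3)] assms(4,6,7)]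
    by (smt (verit) norm_ge_zero power_le_one)
  then show "lp2_norm p (\<psi> x *\<^sub>R w + (e * (x \<bullet> f)) *\<^sub>R lp2_tangent p w) \<le> 1"
    by (rule lp2_norm_tangent_perturbation_le_1[OF assms(1,2,5,8)])
qed

lemma not_extreme_contraction_if_symmetric_perturbation:
  assumes "(\<lambda>x. T x + D x) \<in> op_unit_ball p" "(\<lambda>x. T x - D x) \<in> op_unit_ball p"
    and "D y \<noteq> 0"
  shows "\<not> extreme_contraction p T"
proof -
  have "(T y + D y) - (T y - D y) = 2 *\<^sub>R D y" by (simp add: scaleR_2)
  then have distinct: "(\<lambda>x. T x + D x) \<noteq> (\<lambda>x. T x - D x)"
    using assms(3) by (metis diff_self scaleR_eq_0_iff zero_neq_numeral)
  have midpoint: "T = (\<lambda>x. (1/2::real) *\<^sub>R (T x + D x) + (1 - 1/2) *\<^sub>R (T x - D x))"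
  proof
    fix x
    have "(1/2::real) *\<^sub>R (T x + D x) + (1 - 1/2) *\<^sub>R (T x - D x)
        = (1/2::real) *\<^sub>R T x + (1/2::real) *\<^sub>R T x"
      by (simp add: scaleR_add_right scaleR_diff_right)
    also have "\<dots> = T x" by (simp flip: scaleR_add_left)
    finally show "T x = (1/2::real) *\<^sub>R (T x + D x) + (1 - 1/2) *\<^sub>R (T x - D x)" ..
  qed
  have "\<exists>S1\<in>op_unit_ball p. \<exists>S2\<in>op_unit_ball p. \<exists>t::real. 0 < t \<and> t < 1 \<and>
      S1 \<noteq> S2 \<and> T = (\<lambda>x. t *\<^sub>R S1 x + (1 - t) *\<^sub>R S2 x)"
  proof (intro bexI exI conjI)
    show "0 < (1/2::real)" "(1/2::real) < 1" by simp_all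
    show "(\<lambda>x. T x + D x) \<noteq> (\<lambda>x. T x - D x)" by (fact distinct)
  qed (fact midpoint assms(2) assms(1))+
  then show ?thesis unfolding extreme_contraction_def by blast
qed

theorem mainTheorem13:
  fixes p :: nat and T :: "'a::{real_inner, complete_space} \<Rightarrow> real \<times> real"
  assumes "even p" and "p > 0"
    and "\<exists>u v :: 'a. u \<noteq> v \<and> independent {u, v}"
    and "bounded_linear T"
    and "dim (range T) = 1"
    and "op_norm_lp p T = 1"
  shows "\<not> extreme_contraction p T"
proof -
  obtain \<psi> w where \<psi>: "bounded_linear \<psi>" and w: "lp2_norm p w = 1" and T: "T = (\<lambda>x. \<psi> x *\<^sub>R w)"
    using rank_one_lp2_factorization[OF assms(1,2,4,5)] .
  have \<psi>_le: "\<bar>\<psi> x\<bar> \<le> norm x" for x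
    using abs_le_norm_if_op_norm_lp_rank_one_le_1[OF assms(2) \<psi> w] assms(6) T by simp
  obtain f where f: "norm f = 1" "\<psi> f = 0"
    using assms(3) linear_functional_kernel_unit[OF bounded_linear.linear[OF \<psi>]] by blast
  define e :: real where "e = 1 / (2 * real p * 2^p)"
  have "e > 0" "e \<le> 1" using assms(2) by (simp_all add: e_def mult_ge1_I)
  then have e: "2 * real p * 2^p * e^2 \<le> 1"
    using assms(2) by (simp add: e_def power2_eq_square)
  define D where "D x = (e * (x \<bullet> f)) *\<^sub>R lp2_tangent p w" for x
  have "(\<lambda>x. T x + D x) \<in> op_unit_ball p"
    using rank_one_tangent_perturbation_in_op_unit_ball[OF assms(1,2) \<psi> \<psi>_le w f e]
    by (simp add: T D_def)
  moreover have "(\<lambda>x. T x - D x) \<in> op_unit_ball p"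
    using rank_one_tangent_perturbation_in_op_unit_ball[OF assms(1,2) \<psi> \<psi>_le w _ _ e, of "- f"] f
      linear_neg[OF bounded_linear.linear[OF \<psi>]]
    by (simp add: T D_def)
  moreover have "D f \<noteq> 0"
  proof -
    have "w \<noteq> 0" using w by (auto simp: lp2_norm_def)
    then show ?thesis
      using lp2_tangent_nonzero[OF assms(2)] f(1) \<open>e > 0\<close> by (simp add: D_def norm_eq_1)
  qed
  ultimately show ?thesis by (rule not_extreme_contraction_if_symmetric_perturbation)
qed

end
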